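(* Let $Y,Y'$ be unbounded connected graphs with $Y'$ narrow. Suppose there are a constant $C\ge1$ and a metrically proper injective map $f:V(Y)\to V(Y')$ with $d_{Y'}(f(x),f(y))\le C\,d_Y(x,y)+C$ for all vertices $x,y$ of $Y$. Then $Y$ is narrow.
   Context: $V(Y)$ is the vertex set and $d_Y$ the path metric (edges of length 1). A map is metrically proper if preimages of bounded sets are bounded. A vertex subset $Z$ is $\mu$-coarsely connected if any two points of $Z$ are joined by a chain in $Z$ with consecutive distances at most $\mu$. An unbounded connected graph $Y$ is narrow if for each $\mu\ge1$ there is $L(\mu)\ge 1$ such that any $L(\mu)+1$ unbounded $\mu$-coarsely connected vertex subsets of $Y$ include two that intersect. *)

theory Defs
  imports Main "HOL-Library.Extended_Nat"
begin

definition is_graph :: "'a set \<Rightarrow> ('a \<Rightarrow> 'a \<Rightarrow> bool) \<Rightarrow> bool" where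
  "is_graph V E \<longleftrightarrow> (\<forall>x y. E x y \<longrightarrow> x \<in> V \<and> y \<in> V \<and> E y x \<and> x \<noteq> y)"

definition is_walk :: "'a set \<Rightarrow> ('a \<Rightarrow> 'a \<Rightarrow> bool) \<Rightarrow> 'a list \<Rightarrow> bool" where
  "is_walk V E xs \<longleftrightarrow> xs \<noteq> [] \<and> set xs \<subseteq> V \<and>
     (\<forall>i. Suc i < length xs \<longrightarrow> E (xs ! i) (xs ! Suc i))"

definition graph_connected :: "'a set \<Rightarrow> ('a \<Rightarrow> 'a \<Rightarrow> bool) \<Rightarrow> bool" where
  "graph_connected V E \<longleftrightarrow> V \<noteq> {} \<and>
     (\<forall>x\<in>V. \<forall>y\<in>V. \<exists>xs. is_walk V E xs \<and> hd xs = x \<and> last xs = y)"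

text \<open>Path metric (edges of length 1): the least number of edges of a walk
from x to y (meaningful for connected graphs).\<close>

definition gdist :: "'a set \<Rightarrow> ('a \<Rightarrow> 'a \<Rightarrow> bool) \<Rightarrow> 'a \<Rightarrow> 'a \<Rightarrow> nat" where
  "gdist V E x y = (LEAST n. \<exists>xs. is_walk V E xs \<and> hd xs = x \<and> last xs = y \<and> length xs = Suc n)"

definition gbounded :: "'a set \<Rightarrow> ('a \<Rightarrow> 'a \<Rightarrow> bool) \<Rightarrow> 'a set \<Rightarrow> bool" where
  "gbounded V E Z \<longleftrightarrow> (\<exists>R::nat. \<forall>z\<in>Z. \<forall>w\<in>Z. gdist V E z w \<le> R)"

definition graph_unbounded :: "'a set \<Rightarrow> ('a \<Rightarrow> 'a \<Rightarrow> bool) \<Rightarrow> bool" where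
  "graph_unbounded V E \<longleftrightarrow> \<not> gbounded V E V"

definition coarsely_connected :: "'a set \<Rightarrow> ('a \<Rightarrow> 'a \<Rightarrow> bool) \<Rightarrow> real \<Rightarrow> 'a set \<Rightarrow> bool" where
  "coarsely_connected V E \<mu> Z \<longleftrightarrow> Z \<subseteq> V \<and>
     (\<forall>x\<in>Z. \<forall>y\<in>Z. \<exists>zs. zs \<noteq> [] \<and> set zs \<subseteq> Z \<and> hd zs = x \<and> last zs = y \<and>
        (\<forall>i. Suc i < length zs \<longrightarrow> real (gdist V E (zs ! i) (zs ! Suc i)) \<le> \<mu>))"

definition narrow :: "'a set \<Rightarrow> ('a \<Rightarrow> 'a \<Rightarrow> bool) \<Rightarrow> bool" where
  "narrow V E \<longleftrightarrow> (\<forall>\<mu>::real. \<mu> \<ge> 1 \<longrightarrow> (\<exists>L::nat. L \<ge> 1 \<and>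
     (\<forall>S :: nat \<Rightarrow> 'a set.
        (\<forall>i\<le>L. \<not> gbounded V E (S i) \<and> coarsely_connected V E \<mu> (S i)) \<longrightarrow>
        (\<exists>i\<le>L. \<exists>j\<le>L. i \<noteq> j \<and> S i \<inter> S j \<noteq> {}))))"

definition metrically_proper ::
  "'a set \<Rightarrow> ('a \<Rightarrow> 'a \<Rightarrow> bool) \<Rightarrow> 'b set \<Rightarrow> ('b \<Rightarrow> 'b \<Rightarrow> bool) \<Rightarrow> ('a \<Rightarrow> 'b) \<Rightarrow> bool" where
  "metrically_proper V E V' E' f \<longleftrightarrow>
     (\<forall>B. B \<subseteq> V' \<longrightarrow> gbounded V' E' B \<longrightarrow> gbounded V E {x\<in>V. f x \<in> B})"

end

theory Submission
  imports Defs
begin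

text \<open>A metrically proper map sends unbounded sets to unbounded sets, and a map that
is coarsely Lipschitz sends \<open>\<mu>\<close>-coarsely connected sets to \<open>(C\<mu> + C)\<close>-coarsely
connected ones. So the images of \<open>L + 1\<close> unbounded \<open>\<mu>\<close>-coarsely connected subsets
of \<open>Y\<close> are \<open>L + 1\<close> unbounded \<open>(C\<mu> + C)\<close>-coarsely connected subsets of the narrow
graph \<open>Y'\<close>; two of them meet, and injectivity pulls the intersection back to \<open>Y\<close>.\<close>

lemma unbounded_image_if_metrically_proper:
  assumes "metrically_proper V E V' E' f" and "f ` V \<subseteq> V'"
    and "Z \<subseteq> V" and "\<not> gbounded V E Z"
  shows "\<not> gbounded V' E' (f ` Z)"
proof
  assume "gbounded V' E' (f ` Z)"
  moreover have "f ` Z \<subseteq> V'" using assms(2,3) by blast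
  ultimately have "gbounded V E {x\<in>V. f x \<in> f ` Z}"
    using assms(1) unfolding metrically_proper_def by blast
  moreover have "Z \<subseteq> {x\<in>V. f x \<in> f ` Z}" using assms(3) by blast
  ultimately have "gbounded V E Z" unfolding gbounded_def by (meson subsetD)
  with assms(4) show False by contradiction
qed

lemma coarsely_connected_image:
  assumes cc: "coarsely_connected V E \<mu> Z" and "f ` V \<subseteq> V'"
    and step: "\<And>x y. x \<in> V \<Longrightarrow> y \<in> V \<Longrightarrow> real (gdist V E x y) \<le> \<mu> \<Longrightarrow>
        real (gdist V' E' (f x) (f y)) \<le> \<mu>'"
  shows "coarsely_connected V' E' \<mu>' (f ` Z)"
  unfolding coarsely_connected_def
proof (intro conjI ballI)
  have ZV: "Z \<subseteq> V" using cc unfolding coarsely_connected_def by blast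
  then show "f ` Z \<subseteq> V'" using assms(2) by blast
  fix a b assume "a \<in> f ` Z" and "b \<in> f ` Z"
  then obtain x y where x: "x \<in> Z" "a = f x" and y: "y \<in> Z" "b = f y" by blast
  then obtain zs where zs: "zs \<noteq> []" "set zs \<subseteq> Z" "hd zs = x" "last zs = y"
    and close: "\<And>k. Suc k < length zs \<Longrightarrow> real (gdist V E (zs ! k) (zs ! Suc k)) \<le> \<mu>"
    using cc unfolding coarsely_connected_def by blast
  show "\<exists>ws. ws \<noteq> [] \<and> set ws \<subseteq> f ` Z \<and> hd ws = a \<and> last ws = b \<and>
      (\<forall>k. Suc k < length ws \<longrightarrow> real (gdist V' E' (ws ! k) (ws ! Suc k)) \<le> \<mu>')"
  proof (intro exI[of _ "map f zs"] conjI allI impI)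
    show "map f zs \<noteq> []" "set (map f zs) \<subseteq> f ` Z" using zs by auto
    show "hd (map f zs) = a" "last (map f zs) = b" using zs x y by (simp_all add: hd_map last_map)
    fix k assume k: "Suc k < length (map f zs)"
    moreover have "set zs \<subseteq> V" using zs(2) ZV by blast
    ultimately have "zs ! k \<in> V" "zs ! Suc k \<in> V" by (simp_all add: subset_code(1))
    with step close k show "real (gdist V' E' (map f zs ! k) (map f zs ! Suc k)) \<le> \<mu>'" by simp
  qed
qed

theorem mainTheorem9:
  fixes V :: "'a set" and E :: "'a \<Rightarrow> 'a \<Rightarrow> bool"
    and V' :: "'b set" and E' :: "'b \<Rightarrow> 'b \<Rightarrow> bool"
    and f :: "'a \<Rightarrow> 'b" and C :: real
  assumes "is_graph V E" and "graph_connected V E" and "graph_unbounded V E"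
    and "is_graph V' E'" and "graph_connected V' E'" and "graph_unbounded V' E'"
    and "narrow V' E'"
    and "C \<ge> 1"
    and "f ` V \<subseteq> V'" and "inj_on f V"
    and "metrically_proper V E V' E' f"
    and "\<forall>x\<in>V. \<forall>y\<in>V. real (gdist V' E' (f x) (f y)) \<le> C * real (gdist V E x y) + C"
  shows "narrow V E"
  unfolding narrow_def
proof (intro allI impI)
  fix \<mu> :: real assume "\<mu> \<ge> 1"
  then have "C * \<mu> + C \<ge> 1" using assms(8) by (smt (verit) mult_nonneg_nonneg)
  then obtain L :: nat where "L \<ge> 1" and meet: "\<And>S. (\<forall>i\<le>L. \<not> gbounded V' E' (S i) \<and>
      coarsely_connected V' E' (C * \<mu> + C) (S i)) \<Longrightarrow> \<exists>i\<le>L. \<exists>j\<le>L. i \<noteq> j \<and> S i \<inter> S j \<noteq> {}"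
    using assms(7) unfolding narrow_def by meson
  have step: "real (gdist V' E' (f x) (f y)) \<le> C * \<mu> + C"
    if "x \<in> V" "y \<in> V" "real (gdist V E x y) \<le> \<mu>" for x y
    using assms(8,12) that by (smt (verit) mult_left_mono)
  show "\<exists>L::nat. L \<ge> 1 \<and> (\<forall>S :: nat \<Rightarrow> 'a set.
      (\<forall>i\<le>L. \<not> gbounded V E (S i) \<and> coarsely_connected V E \<mu> (S i)) \<longrightarrow>
      (\<exists>i\<le>L. \<exists>j\<le>L. i \<noteq> j \<and> S i \<inter> S j \<noteq> {}))"
  proof (rule exI[of _ L], intro conjI allI impI \<open>L \<ge> 1\<close>)
    fix S assume S: "\<forall>i\<le>L. \<not> gbounded V E (S i) \<and> coarsely_connected V E \<mu> (S i)"
    then have SV: "\<And>i. i \<le> L \<Longrightarrow> S i \<subseteq> V" unfolding coarsely_connected_def by blast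
    have "\<forall>i\<le>L. \<not> gbounded V' E' (f ` S i) \<and> coarsely_connected V' E' (C * \<mu> + C) (f ` S i)"
      using S SV step assms(9,11) unbounded_image_if_metrically_proper coarsely_connected_image
      by metis
    then obtain i j where "i \<le> L" "j \<le> L" "i \<noteq> j" "f ` S i \<inter> f ` S j \<noteq> {}"
      using meet[of "\<lambda>i. f ` S i"] by blast
    moreover from this have "S i \<inter> S j \<noteq> {}"
      using SV assms(10) unfolding inj_on_def by blast
    ultimately show "\<exists>i\<le>L. \<exists>j\<le>L. i \<noteq> j \<and> S i \<inter> S j \<noteq> {}" by blast
  qed
qed

end
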